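(* Let $G=(V,E)$ be a graph with $n$ vertices and let $f_0, f_t$ be token-placements of $G$ with $f_0 \simeq f_t$. Then $\mathrm{OPT}(f_0,f_t) \le \binom{n}{2}$.
   Context: Graphs are finite, simple and undirected; $n=|V|$. Let $C=\{1,\dots,c\}$ be a set of colors. A token-placement of $G$ is a surjective map $f\colon V\to C$ ($f(v)$ is the color of the token on $v$). Two distinct token-placements $f,f'$ are adjacent if there is an edge $uv\in E$ with $f'(u)=f(v)$, $f'(v)=f(u)$ and $f'(w)=f(w)$ for all $w\in V\setminus\{u,v\}$ (i.e. $f'$ arises from $f$ by swapping the tokens on the adjacent vertices $u,v$). A swapping sequence between $f$ and $f'$ is a sequence $f_1=f,f_2,\dots,f_h=f'$ of token-placements in which $f_{k-1}$ and $f_k$ are adjacent for all $k$; its length is $h-1$. $\mathrm{OPT}(f,f')$ denotes the minimum length of a swapping sequence between $f$ and $f'$ ($\infty$ if none exists). We write $f\simeq f'$ if for every connected component $K$ of $G$ and every color $i$, the number of vertices of $K$ with $f$-color $i$ equals the number with $f'$-color $i$. *)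

theory Defs
  imports Main "HOL-Library.Extended_Nat"
begin

definition simple_graph :: "'a set \<Rightarrow> 'a set set \<Rightarrow> bool" where
  "simple_graph V E \<longleftrightarrow> finite V \<and>
     (\<forall>e\<in>E. \<exists>u v. e = {u, v} \<and> u \<in> V \<and> v \<in> V \<and> u \<noteq> v)"

text \<open>Token-placement: surjective map V -> {1..c}; normalised to 0 outside V so that
  placements are determined by their values on V.\<close>
definition token_placement :: "'a set \<Rightarrow> nat \<Rightarrow> ('a \<Rightarrow> nat) \<Rightarrow> bool" where
  "token_placement V c f \<longleftrightarrow> f ` V = {1..c} \<and> (\<forall>x. x \<notin> V \<longrightarrow> f x = 0)"

definition tp_adjacent :: "'a set \<Rightarrow> 'a set set \<Rightarrow> nat \<Rightarrow> ('a \<Rightarrow> nat) \<Rightarrow> ('a \<Rightarrow> nat) \<Rightarrow> bool" where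
  "tp_adjacent V E c f f' \<longleftrightarrow> token_placement V c f \<and> token_placement V c f' \<and> f \<noteq> f' \<and>
     (\<exists>u v. {u, v} \<in> E \<and> f' u = f v \<and> f' v = f u \<and> (\<forall>w \<in> V - {u, v}. f' w = f w))"

text \<open>A swapping sequence f_1 = f, ..., f_h = f' given as a nonempty list; its length is h - 1.\<close>
definition swapping_sequence ::
  "'a set \<Rightarrow> 'a set set \<Rightarrow> nat \<Rightarrow> ('a \<Rightarrow> nat) list \<Rightarrow> ('a \<Rightarrow> nat) \<Rightarrow> ('a \<Rightarrow> nat) \<Rightarrow> bool" where
  "swapping_sequence V E c fs f f' \<longleftrightarrow> fs \<noteq> [] \<and> hd fs = f \<and> last fs = f' \<and>
     (\<forall>i\<in>set fs. token_placement V c i) \<and>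
     (\<forall>k. Suc k < length fs \<longrightarrow> tp_adjacent V E c (fs ! k) (fs ! Suc k))"

definition OPT :: "'a set \<Rightarrow> 'a set set \<Rightarrow> nat \<Rightarrow> ('a \<Rightarrow> nat) \<Rightarrow> ('a \<Rightarrow> nat) \<Rightarrow> enat" where
  "OPT V E c f f' = (INF fs \<in> {fs. swapping_sequence V E c fs f f'}. enat (length fs - 1))"

definition component :: "'a set \<Rightarrow> 'a set set \<Rightarrow> 'a \<Rightarrow> 'a set" where
  "component V E v = {w \<in> V. (\<lambda>x y. {x, y} \<in> E)\<^sup>*\<^sup>* v w}"

definition tp_equiv :: "'a set \<Rightarrow> 'a set set \<Rightarrow> nat \<Rightarrow> ('a \<Rightarrow> nat) \<Rightarrow> ('a \<Rightarrow> nat) \<Rightarrow> bool" where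
  "tp_equiv V E c f f' \<longleftrightarrow> (\<forall>v\<in>V. \<forall>i\<in>{1..c}.
     card {w \<in> component V E v. f w = i} = card {w \<in> component V E v. f' w = i})"

end

(* Induction on the set S of vertices whose tokens are not yet final, starting from S = V. Pick a
   connected component K of the subgraph induced by S and a vertex v of K whose removal leaves
   K - {v} connected (a vertex farthest from some root). Since the colour counts in K agree, K
   contains a token of the colour v must receive; swapping it along a shortest walk to v costs at
   most |S| - 1 swaps, preserves the colour counts of every component, and touches nothing outside
   S. Freezing v then leaves the problem for S - {v}, and (n - 1) + C(n - 1, 2) = C(n, 2). *)

theory Submission
  imports Defs "HOL-Combinatorics.Transposition"
begin

lemma relpowp_length_less_card:
  assumes T: "finite T" and R: "\<And>a b. R a b \<Longrightarrow> b \<in> T" and x: "x \<in> T"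
    and walk: "(R ^^ n) x y"
  shows "\<exists>m < card T. (R ^^ m) x y"
  using walk
proof (induction n rule: less_induct)
  case (less n)
  show ?case
  proof (cases "n < card T")
    case True
    then show ?thesis using less.prems by blast
  next
    case False
    obtain p where p: "p 0 = x" "p n = y" "\<forall>i<n. R (p i) (p (Suc i))"
      using less.prems relpowp_fun_conv by metis
    have "p i \<in> T" if "i \<le> n" for i
    proof (cases i)
      case (Suc k)
      then show ?thesis using that p(3) R by (metis Suc_le_lessD)
    qed (use p(1) x in simp)
    then have "p ` {0..n} \<subseteq> T" by auto
    moreover have "card T < card {0..n}" using False by simp
    ultimately have "\<not> inj_on p {0..n}"
      using card_inj_on_le[OF _ _ T] by (meson leD)
    then obtain i j where ij: "i < j" "j \<le> n" "p i = p j"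
      unfolding inj_on_def by (metis atLeastAtMost_iff linorder_neqE_nat)
    \<comment> \<open>cut out the closed walk from position i to position j\<close>
    have "(R ^^ i) x (p i)"
      unfolding relpowp_fun_conv using p ij by (intro exI[of _ p]) auto
    moreover have "(R ^^ (n - j)) (p j) y"
      unfolding relpowp_fun_conv using p ij by (intro exI[of _ "\<lambda>k. p (j + k)"]) auto
    ultimately have shorter: "(R ^^ (i + (n - j))) x y"
      using ij(3) by (auto simp: relpowp_add)
    have "i + (n - j) < n" using ij by simp
    from less.IH[OF this shorter] show ?thesis .
  qed
qed

lemma edge_endpoints_in_vertices:
  "simple_graph V E \<Longrightarrow> {x, y} \<in> E \<Longrightarrow> x \<in> V \<and> y \<in> V"
  unfolding simple_graph_def by (metis doubleton_eq_iff insertI1)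

definition induced_edge :: "'a set set \<Rightarrow> 'a set \<Rightarrow> 'a \<Rightarrow> 'a \<Rightarrow> bool" where
  "induced_edge E S x y \<longleftrightarrow> {x, y} \<in> E \<and> x \<in> S \<and> y \<in> S"

definition induced_component :: "'a set set \<Rightarrow> 'a set \<Rightarrow> 'a \<Rightarrow> 'a set" where
  "induced_component E S v = {w \<in> S. (induced_edge E S)\<^sup>*\<^sup>* v w}"

lemma induced_edge_sym: "induced_edge E S x y \<Longrightarrow> induced_edge E S y x"
  by (auto simp: induced_edge_def insert_commute)

lemma rtranclp_induced_edge_mono:
  "S' \<subseteq> S \<Longrightarrow> (induced_edge E S')\<^sup>*\<^sup>* x y \<Longrightarrow> (induced_edge E S)\<^sup>*\<^sup>* x y"
  by (rule rtranclp_mono[THEN predicate2D, rotated]) (auto simp: induced_edge_def)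

lemma rtranclp_induced_edge_sym:
  "(induced_edge E S)\<^sup>*\<^sup>* x y \<Longrightarrow> (induced_edge E S)\<^sup>*\<^sup>* y x"
  by (induction rule: rtranclp_induct)
    (auto intro: converse_rtranclp_into_rtranclp induced_edge_sym)

lemma induced_component_mono:
  "S' \<subseteq> S \<Longrightarrow> induced_component E S' x \<subseteq> induced_component E S x"
  unfolding induced_component_def by (auto intro: rtranclp_induced_edge_mono)

lemma induced_component_subset: "induced_component E S x \<subseteq> S"
  by (auto simp: induced_component_def)

lemma in_induced_component_self: "v \<in> S \<Longrightarrow> v \<in> induced_component E S v"
  by (simp add: induced_component_def)

lemma induced_component_eq:
  assumes "x \<in> induced_component E S r"
  shows "induced_component E S x = induced_component E S r"
proof -
  have "(induced_edge E S)\<^sup>*\<^sup>* r x" using assms by (simp add: induced_component_def)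
  then show ?thesis unfolding induced_component_def
    by (auto intro: rtranclp_trans dest: rtranclp_induced_edge_sym)
qed

lemma induced_edge_in_component_iff:
  assumes "induced_edge E S a b"
  shows "a \<in> induced_component E S x \<longleftrightarrow> b \<in> induced_component E S x"
  using assms induced_edge_sym[OF assms]
  by (auto simp: induced_component_def induced_edge_def intro: rtranclp.rtrancl_into_rtrancl)

lemma induced_component_Diff_outside:
  assumes "x \<in> S" and "v \<notin> induced_component E S x"
  shows "induced_component E (S - {v}) x = induced_component E S x"
proof
  show "induced_component E (S - {v}) x \<subseteq> induced_component E S x"
    by (rule induced_component_mono) blast
  have "(induced_edge E (S - {v}))\<^sup>*\<^sup>* x w" if "(induced_edge E S)\<^sup>*\<^sup>* x w" for w
    using that
  proof (induction rule: rtranclp_induct)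
    case (step y z)
    have "(induced_edge E S)\<^sup>*\<^sup>* x z" using step.hyps by (rule rtranclp.rtrancl_into_rtrancl)
    then have "z \<in> induced_component E S x"
      using step.hyps(2) by (simp add: induced_component_def induced_edge_def)
    then have "induced_edge E (S - {v}) y z"
      using step.hyps(2) assms(2) induced_edge_in_component_iff[OF step.hyps(2)]
      by (auto simp: induced_edge_def)
    then show ?case using step.IH by simp
  qed simp
  then show "induced_component E S x \<subseteq> induced_component E (S - {v}) x"
    using assms(2) by (auto simp: induced_component_def)
qed

lemma induced_component_eq_component:
  assumes "simple_graph V E"
  shows "induced_component E V x = component V E x"
proof -
  have "induced_edge E V = (\<lambda>x y. {x, y} \<in> E)"
    using edge_endpoints_in_vertices[OF assms] by (auto simp: induced_edge_def fun_eq_iff)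
  then show ?thesis by (simp add: induced_component_def component_def)
qed

lemma induced_component_walk:
  assumes "finite S" and "u \<in> induced_component E S r" and "v \<in> induced_component E S r"
  shows "\<exists>m < card S. (induced_edge E S ^^ m) u v"
proof -
  have ru: "(induced_edge E S)\<^sup>*\<^sup>* r u" and rv: "(induced_edge E S)\<^sup>*\<^sup>* r v"
    using assms(2,3) by (simp_all add: induced_component_def)
  obtain n where walk: "(induced_edge E S ^^ n) u v"
    using rtranclp_imp_relpowp[OF rtranclp_trans[OF rtranclp_induced_edge_sym[OF ru] rv]] by blast
  have "u \<in> S" using assms(2) induced_component_subset[of E S r] by blast
  show ?thesis
    by (rule relpowp_length_less_card[OF assms(1) _ \<open>u \<in> S\<close> walk]) (simp add: induced_edge_def)
qed

lemma exists_vertex_keeping_component_connected: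
  assumes S: "finite S" and r: "r \<in> S"
  shows "\<exists>v \<in> induced_component E S r.
    \<forall>w \<in> induced_component E S r - {v}. (induced_edge E (S - {v}))\<^sup>*\<^sup>* r w"
proof -
  let ?R = "induced_edge E S" and ?K = "induced_component E S r"
  define d where "d w = (LEAST n. (?R ^^ n) r w)" for w
  have "finite ?K" "r \<in> ?K"
    using S r by (simp_all add: induced_component_def)
  then obtain v where v: "v \<in> ?K" and v_Max: "d v = Max (d ` ?K)"
    using Max_in[of "d ` ?K"] by fastforce
  have v_max: "d w \<le> d v" if "w \<in> ?K" for w
    using that v_Max \<open>finite ?K\<close> by simp
  \<comment> \<open>a shortest walk to any vertex other than v never passes through v, which is farthest from r\<close>
  have avoid: "(induced_edge E (S - {v}))\<^sup>*\<^sup>* r w"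
    if "(?R ^^ n) r w" "n \<le> d v" "w \<noteq> v" for n w
    using that
  proof (induction n arbitrary: w)
    case (Suc n)
    obtain p where p: "(?R ^^ n) r p" "?R p w" using Suc.prems(1) relpowp_Suc_E by metis
    have "p \<noteq> v"
    proof
      assume "p = v"
      then have "d v \<le> n" using p(1) unfolding d_def by (simp add: Least_le)
      then show False using Suc.prems(2) by simp
    qed
    then have "(induced_edge E (S - {v}))\<^sup>*\<^sup>* r p" using Suc.IH[OF p(1)] Suc.prems(2) by simp
    moreover have "induced_edge E (S - {v}) p w"
      using p(2) \<open>p \<noteq> v\<close> Suc.prems(3) by (auto simp: induced_edge_def)
    ultimately show ?case by (rule rtranclp.rtrancl_into_rtrancl)
  qed simp
  have "(induced_edge E (S - {v}))\<^sup>*\<^sup>* r w" if w: "w \<in> ?K - {v}" for w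
  proof -
    have "\<exists>n. (?R ^^ n) r w"
      using w by (auto simp: induced_component_def intro: rtranclp_imp_relpowp)
    then have "(?R ^^ d w) r w" unfolding d_def by (rule LeastI_ex)
    then show ?thesis using avoid v_max w by blast
  qed
  then show ?thesis using v by blast
qed

lemma induced_component_Diff_inside:
  assumes x: "x \<in> induced_component E S r - {v}"
    and conn: "\<forall>w \<in> induced_component E S r - {v}. (induced_edge E (S - {v}))\<^sup>*\<^sup>* r w"
  shows "induced_component E (S - {v}) x = induced_component E S r - {v}"
proof
  let ?K = "induced_component E S r"
  have "induced_component E S x = ?K" using x by (simp add: induced_component_eq)
  then show "induced_component E (S - {v}) x \<subseteq> ?K - {v}"
    using induced_component_mono[of "S - {v}" S E x] induced_component_subset[of E "S - {v}" x]
    by auto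
  show "?K - {v} \<subseteq> induced_component E (S - {v}) x"
  proof
    fix w assume w: "w \<in> ?K - {v}"
    have "(induced_edge E (S - {v}))\<^sup>*\<^sup>* r x" "(induced_edge E (S - {v}))\<^sup>*\<^sup>* r w"
      using conn x w by blast+
    then have "(induced_edge E (S - {v}))\<^sup>*\<^sup>* x w"
      by (blast intro: rtranclp_trans rtranclp_induced_edge_sym)
    moreover have "w \<in> S - {v}" using w induced_component_subset[of E S r] by blast
    ultimately show "w \<in> induced_component E (S - {v}) x"
      by (simp add: induced_component_def)
  qed
qed

lemma exists_non_cut_vertex:
  assumes "finite S" and "r \<in> S"
  obtains v where "v \<in> induced_component E S r"
    and "\<And>x. x \<in> S - {v} \<Longrightarrow>
      induced_component E (S - {v}) x = induced_component E S x - {v}"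
proof -
  let ?K = "induced_component E S r"
  obtain v where v: "v \<in> ?K" and conn: "\<forall>w \<in> ?K - {v}. (induced_edge E (S - {v}))\<^sup>*\<^sup>* r w"
    using exists_vertex_keeping_component_connected[OF assms] by blast
  have "induced_component E (S - {v}) x = induced_component E S x - {v}" if x: "x \<in> S - {v}" for x
  proof (cases "x \<in> ?K")
    case True
    then have "induced_component E S x = ?K" by (rule induced_component_eq)
    then show ?thesis using induced_component_Diff_inside[OF _ conn] True x by simp
  next
    case False
    have "v \<notin> induced_component E S x"
    proof
      assume "v \<in> induced_component E S x"
      then have "induced_component E S x = induced_component E S v"
        by (rule induced_component_eq[symmetric])
      also have "\<dots> = ?K" using v by (rule induced_component_eq)
      finally show False using False in_induced_component_self[of x S E] x by blast
    qed
    then show ?thesis using induced_component_Diff_outside[of x S v E] x by simp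
  qed
  then show thesis using v that by blast
qed

definition same_component_counts ::
  "'a set set \<Rightarrow> 'a set \<Rightarrow> ('a \<Rightarrow> nat) \<Rightarrow> ('a \<Rightarrow> nat) \<Rightarrow> bool" where
  "same_component_counts E S f g \<longleftrightarrow> (\<forall>x\<in>S. \<forall>i.
     card {w \<in> induced_component E S x. f w = i} = card {w \<in> induced_component E S x. g w = i})"

lemma same_component_counts_if_tp_equiv:
  assumes "simple_graph V E" and "token_placement V c f" and "token_placement V c g"
    and "tp_equiv V E c f g"
  shows "same_component_counts E V f g"
  unfolding same_component_counts_def
proof (intro ballI allI)
  fix x i assume x: "x \<in> V"
  let ?C = "induced_component E V x"
  show "card {w \<in> ?C. f w = i} = card {w \<in> ?C. g w = i}"
  proof (cases "i \<in> {1..c}")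
    case True
    then show ?thesis
      using assms(4) x by (simp add: tp_equiv_def induced_component_eq_component[OF assms(1)])
  next
    case False
    then have empty: "{w \<in> ?C. f w = i} = {}" "{w \<in> ?C. g w = i} = {}"
      using assms(2,3) induced_component_subset[of E V x] unfolding token_placement_def by blast+
    show ?thesis unfolding empty ..
  qed
qed

lemma same_component_counts_Diff:
  assumes "same_component_counts E S f g" and "f v = g v"
    and "\<And>x. x \<in> S - {v} \<Longrightarrow>
      induced_component E (S - {v}) x = induced_component E S x - {v}"
  shows "same_component_counts E (S - {v}) f g"
  unfolding same_component_counts_def
proof (intro ballI allI)
  fix x i assume x: "x \<in> S - {v}"
  let ?C = "induced_component E S x"
  have "{w \<in> ?C - {v}. f w = i} = {w \<in> ?C. f w = i} - {v}"
    "{w \<in> ?C - {v}. g w = i} = {w \<in> ?C. g w = i} - {v}" by auto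
  moreover have "card {w \<in> ?C. f w = i} = card {w \<in> ?C. g w = i}"
    using assms(1) x by (simp add: same_component_counts_def)
  ultimately show "card {w \<in> induced_component E (S - {v}) x. f w = i}
    = card {w \<in> induced_component E (S - {v}) x. g w = i}"
    using assms(2) assms(3)[OF x] by (simp add: card_Diff_singleton_if)
qed

lemma exists_token_in_component:
  assumes "same_component_counts E S f g" and "finite S" and "r \<in> S"
    and "v \<in> induced_component E S r"
  shows "\<exists>u \<in> induced_component E S r. f u = g v"
proof -
  let ?K = "induced_component E S r"
  have "finite ?K" using assms(2) induced_component_subset finite_subset by metis
  then have "card {w \<in> ?K. g w = g v} \<noteq> 0" using assms(4) by auto
  moreover have "card {w \<in> ?K. f w = g v} = card {w \<in> ?K. g w = g v}"
    using assms(1,3) by (simp add: same_component_counts_def)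
  ultimately have "{w \<in> ?K. f w = g v} \<noteq> {}" by (metis card.empty)
  then show ?thesis by blast
qed

lemma card_filter_comp_transpose:
  assumes "x \<in> A \<longleftrightarrow> y \<in> A"
  shows "card {w \<in> A. (f \<circ> transpose x y) w = i} = card {w \<in> A. f w = i}"
proof -
  have "transpose x y w \<in> A \<longleftrightarrow> w \<in> A" for w
    using in_transpose_image_iff[of w x y A] transpose_image_eq[OF assms] by simp
  then have "{w \<in> A. (f \<circ> transpose x y) w = i} = transpose x y ` {w \<in> A. f w = i}"
    by (auto simp: in_transpose_image_iff)
  then show ?thesis by (simp add: card_image)
qed

lemma same_component_counts_swap:
  assumes "induced_edge E S x y"
  shows "same_component_counts E S (f \<circ> transpose x y) f"
  unfolding same_component_counts_def
  by (intro ballI allI card_filter_comp_transpose induced_edge_in_component_iff[OF assms])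

inductive swap_reachable ::
  "'a set \<Rightarrow> 'a set set \<Rightarrow> nat \<Rightarrow> ('a \<Rightarrow> nat) \<Rightarrow> ('a \<Rightarrow> nat) \<Rightarrow> nat \<Rightarrow> bool"
  for V E c where
  refl: "token_placement V c f \<Longrightarrow> swap_reachable V E c f f k"
| step: "swap_reachable V E c f g k \<Longrightarrow> tp_adjacent V E c g h \<Longrightarrow> swap_reachable V E c f h (Suc k)"

lemma swap_reachable_mono:
  "swap_reachable V E c f g k \<Longrightarrow> k \<le> l \<Longrightarrow> swap_reachable V E c f g l"
proof (induction arbitrary: l rule: swap_reachable.induct)
  case (step f g k h)
  then obtain l' where "l = Suc l'" "k \<le> l'" by (metis Suc_le_D Suc_le_mono)
  then show ?case using step by (blast intro: swap_reachable.step)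
qed (rule swap_reachable.refl)

lemma swap_reachable_trans:
  assumes "swap_reachable V E c f g k" and "swap_reachable V E c g h l"
  shows "swap_reachable V E c f h (k + l)"
  using assms(2,1)
proof induction
  case refl
  then show ?case by (blast intro: swap_reachable_mono le_add1)
next
  case step
  then show ?case by (simp add: swap_reachable.step)
qed

lemma swap_reachable_token_placement:
  "swap_reachable V E c f g k \<Longrightarrow> token_placement V c g"
  by (induction rule: swap_reachable.induct) (auto simp: tp_adjacent_def)

lemma token_placement_comp_transpose:
  assumes "simple_graph V E" and "token_placement V c g" and "{x, y} \<in> E"
  shows "token_placement V c (g \<circ> transpose x y)"
proof -
  have xy: "x \<in> V" "y \<in> V" using edge_endpoints_in_vertices[OF assms(1,3)] by simp_all
  then have "(g \<circ> transpose x y) ` V = g ` V"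
    by (simp only: image_comp[symmetric] transpose_image_eq)
  moreover have "transpose x y w = w" if "w \<notin> V" for w
    using that xy by (auto simp: transpose_def)
  ultimately show ?thesis using assms(2) by (simp add: token_placement_def)
qed

lemma swap_reachable_swap:
  assumes G: "simple_graph V E" and reach: "swap_reachable V E c f g k" and e: "{x, y} \<in> E"
  shows "swap_reachable V E c f (g \<circ> transpose x y) (Suc k)"
proof (cases "g \<circ> transpose x y = g")
  case True
  have "swap_reachable V E c f g (Suc k)" using reach by (rule swap_reachable_mono) simp
  then show ?thesis by (simp only: True)
next
  case False
  have "token_placement V c g" using reach by (rule swap_reachable_token_placement)
  moreover have "token_placement V c (g \<circ> transpose x y)"
    using token_placement_comp_transpose[OF G _ e] calculation .
  moreover have "\<forall>w \<in> V - {x, y}. (g \<circ> transpose x y) w = g w" by simp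
  ultimately have "tp_adjacent V E c g (g \<circ> transpose x y)"
    using False e unfolding tp_adjacent_def by (intro conjI exI[of _ x] exI[of _ y]) simp_all
  with reach show ?thesis by (rule swap_reachable.step)
qed

lemma swapping_sequence_if_swap_reachable:
  "swap_reachable V E c f g k \<Longrightarrow>
    \<exists>fs. swapping_sequence V E c fs f g \<and> length fs \<le> Suc k"
proof (induction rule: swap_reachable.induct)
  case (refl f k)
  then show ?case by (intro exI[of _ "[f]"]) (simp add: swapping_sequence_def)
next
  case (step f g k h)
  then obtain fs where fs: "swapping_sequence V E c fs f g" "length fs \<le> Suc k" by blast
  have "swapping_sequence V E c (fs @ [h]) f h"
    unfolding swapping_sequence_def
  proof (intro conjI allI impI ballI)
    fix j assume j: "Suc j < length (fs @ [h])"
    show "tp_adjacent V E c ((fs @ [h]) ! j) ((fs @ [h]) ! Suc j)"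
    proof (cases "Suc j < length fs")
      case True
      then show ?thesis using fs(1) by (simp add: swapping_sequence_def nth_append)
    next
      case False
      then have last: "Suc j = length fs" using j by simp
      moreover have "last fs = g" "fs \<noteq> []" using fs(1) by (simp_all add: swapping_sequence_def)
      ultimately have "fs ! j = g" by (metis diff_Suc_1 last_conv_nth)
      then show ?thesis using step.hyps(2) last by (simp add: nth_append)
    qed
  qed (use fs(1) step.hyps(2) in \<open>auto simp: swapping_sequence_def tp_adjacent_def\<close>)
  then show ?case using fs(2) by (intro exI[of _ "fs @ [h]"]) simp
qed

lemma OPT_le_if_swap_reachable:
  assumes "swap_reachable V E c f g k"
  shows "OPT V E c f g \<le> enat k"
proof -
  obtain fs where fs: "swapping_sequence V E c fs f g" "length fs \<le> Suc k"
    using swapping_sequence_if_swap_reachable[OF assms] by blast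
  have "OPT V E c f g \<le> enat (length fs - 1)"
    unfolding OPT_def by (rule INF_lower) (use fs in simp)
  also have "\<dots> \<le> enat k" using fs(2) by simp
  finally show ?thesis .
qed

lemma move_token_along_walk:
  assumes G: "simple_graph V E" and f: "token_placement V c f"
    and walk: "(induced_edge E S ^^ m) a b"
  shows "\<exists>f'. swap_reachable V E c f f' m \<and> f' b = f a \<and> (\<forall>w. w \<notin> S \<longrightarrow> f' w = f w)
    \<and> same_component_counts E S f' f"
  using walk
proof (induction m arbitrary: b)
  case 0
  then show ?case using f by (auto simp: same_component_counts_def intro: swap_reachable.refl)
next
  case (Suc m)
  obtain y where walk_y: "(induced_edge E S ^^ m) a y" and edge: "induced_edge E S y b"
    using Suc.prems relpowp_Suc_E by metis
  obtain f1 where f1: "swap_reachable V E c f f1 m" "f1 y = f a" "\<forall>w. w \<notin> S \<longrightarrow> f1 w = f w"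
    "same_component_counts E S f1 f"
    using Suc.IH[OF walk_y] by blast
  have "{y, b} \<in> E" "y \<in> S" "b \<in> S" using edge by (simp_all add: induced_edge_def)
  show ?case
  proof (intro exI[of _ "f1 \<circ> transpose y b"] conjI allI impI)
    show "swap_reachable V E c f (f1 \<circ> transpose y b) (Suc m)"
      using G f1(1) \<open>{y, b} \<in> E\<close> by (rule swap_reachable_swap)
    show "(f1 \<circ> transpose y b) b = f a" using f1(2) by simp
    fix w assume "w \<notin> S"
    then show "(f1 \<circ> transpose y b) w = f w"
      using \<open>y \<in> S\<close> \<open>b \<in> S\<close> f1(3) by (auto simp: transpose_def)
  next
    show "same_component_counts E S (f1 \<circ> transpose y b) f"
      using same_component_counts_swap[OF edge] f1(4) by (simp add: same_component_counts_def)
  qed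
qed

lemma swap_reachable_if_same_component_counts:
  assumes G: "simple_graph V E" and "S \<subseteq> V" and "token_placement V c f"
    and "\<forall>w. w \<notin> S \<longrightarrow> f w = g w" and "same_component_counts E S f g"
  shows "swap_reachable V E c f g (card S choose 2)"
  using assms(2-)
proof (induction "card S" arbitrary: S f)
  case 0
  have "finite S" using G \<open>S \<subseteq> V\<close> finite_subset by (auto simp: simple_graph_def)
  then have "f = g" using 0 by auto
  then show ?case using 0 by (simp add: swap_reachable.refl)
next
  case (Suc n)
  have S: "finite S" using G \<open>S \<subseteq> V\<close> finite_subset by (auto simp: simple_graph_def)
  then obtain r where r: "r \<in> S" using Suc.hyps(2) by fastforce
  obtain v where v: "v \<in> induced_component E S r" and non_cut:
    "\<And>x. x \<in> S - {v} \<Longrightarrow> induced_component E (S - {v}) x = induced_component E S x - {v}"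
    using exists_non_cut_vertex[OF S r] by blast
  obtain u where u: "u \<in> induced_component E S r" "f u = g v"
    using exists_token_in_component[OF Suc.prems(4) S r v] by blast
  obtain m where "m < card S" and walk: "(induced_edge E S ^^ m) u v"
    using induced_component_walk[OF S u(1) v] by blast
  obtain f' where f': "swap_reachable V E c f f' m" "f' v = f u" "\<forall>w. w \<notin> S \<longrightarrow> f' w = f w"
    "same_component_counts E S f' f"
    using move_token_along_walk[OF G Suc.prems(2) walk] by blast
  have "f' v = g v" using f'(2) u(2) by simp
  have "same_component_counts E S f' g"
    using f'(4) Suc.prems(4) by (simp add: same_component_counts_def)
  then have counts: "same_component_counts E (S - {v}) f' g"
    using \<open>f' v = g v\<close> non_cut by (rule same_component_counts_Diff)
  have "v \<in> S" using v induced_component_subset[of E S r] by blast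
  then have card: "n = card (S - {v})" and sub: "S - {v} \<subseteq> V"
    using Suc.hyps(2) Suc.prems(1) S by auto
  have out: "\<forall>w. w \<notin> S - {v} \<longrightarrow> f' w = g w"
    using \<open>f' v = g v\<close> f'(3) Suc.prems(3) by auto
  have "swap_reachable V E c f' g (n choose 2)"
    using Suc.hyps(1)[OF card sub swap_reachable_token_placement[OF f'(1)] out counts] card by simp
  with f'(1) have "swap_reachable V E c f g (m + (n choose 2))" by (rule swap_reachable_trans)
  moreover have "m + (n choose 2) \<le> card S choose 2"
    using \<open>m < card S\<close> Suc.hyps(2)[symmetric] by (simp add: numeral_2_eq_2)
  ultimately show ?case by (rule swap_reachable_mono)
qed

theorem mainTheorem1:
  fixes V :: "'a set" and E :: "'a set set" and c :: nat and f0 ft :: "'a \<Rightarrow> nat"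
  assumes "simple_graph V E"
    and "token_placement V c f0" and "token_placement V c ft"
    and "tp_equiv V E c f0 ft"
  shows "OPT V E c f0 ft \<le> enat (card V choose 2)"
proof -
  have "\<forall>w. w \<notin> V \<longrightarrow> f0 w = ft w"
    using assms(2,3) by (simp add: token_placement_def)
  moreover have "same_component_counts E V f0 ft"
    using same_component_counts_if_tp_equiv[OF assms] .
  ultimately have "swap_reachable V E c f0 ft (card V choose 2)"
    by (rule swap_reachable_if_same_component_counts[OF assms(1) order_refl assms(2)])
  then show ?thesis by (rule OPT_le_if_swap_reachable)
qed

end
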